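(* Let $d\le n$ be positive integers (with $d\ll n$), let $U\subseteq\mathbb{R}^n$, and let $F:U\to\mathbb{R}^n$ with $F(\bar x)=0$ for some $\bar x\in U$, and let $\mathcal{H}F:U\rightrightarrows\mathbb{R}^{n\times n}$ be a set-valued map and $c>0$ such that $$\forall x\in U,\quad \sup_{H\in\mathcal{H}F(x)}\|F(x)-H(x-\bar x)\|\le c\,\|x-\bar x\|.$$ Let $\mathcal{S}$ be a Johnson–Lindenstrauss-type probability distribution over $\mathbb{R}^{d\times n}$ (see context). Let $y\in U$, $H\in\mathcal{H}F(y)$, let $S$ be sampled from $\mathcal{S}$, and assume there exist $\varepsilon>0$ and $\delta>0$ such that, with probability at least $1-\delta$, all three of the following hold: (i) $\|S^TSHS^TS-H\|\le\varepsilon$; (ii) $\|y-\bar x-S^T(SHS^T)^{-1}SF(y)\|\le(1+\varepsilon)\,\|Sy-S\bar x-(SHS^T)^{-1}SF(y)\|$; (iii) $\|SF(y)-(SHS^T)S(y-\bar x)\|\le(1+\varepsilon)\,\|F(y)-S^T(SHS^T)S(y-\bar x)\|$. Let $y^{+}=y-S^T(SHS^T)^{-1}SF(y)$ (an element of the sketched Newton-type operator $\mathcal{N}_{\mathcal{H}F}(y,S)$, so $SHS^T$ is invertible). Then $$\mathbb{P}\left(\|y^{+}-\bar x\|\le(1+\varepsilon)^2(c+\varepsilon)\,\|(SHS^T)^{-1}\|\,\|y-\bar x\|\right)\ge 1-\delta.$$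
   Context: Norms are Euclidean on vectors and Frobenius on matrices. A Johnson–Lindenstrauss-type distribution over $\mathbb{R}^{d\times n}$ is one for which there are $\varepsilon'>0$, $\delta'<1/2$ with $d\in\mathcal{O}(-\varepsilon'^{-2}\log\delta')$ such that for every $x\in\mathbb{R}^n$ with $\|x\|=1$, a sample $A$ satisfies $\mathbb{P}(|\|Ax\|^2-1|\le\varepsilon')\ge 1-\delta'$ (e.g. matrices with i.i.d. standard normal entries). The sketched Newton-type operator is $\mathcal{N}_{\mathcal{H}F}(x,S)=\{x-S^T(SHS^T)^{-1}SF(x)\;|\;H\in\mathcal{H}F(x),\ \det SHS^T\neq 0\}$. *)

theory Defs
  imports "HOL-Probability.Probability"
begin

text \<open>Matrices in R^(d x n) are rendered as real^'n^'d; the norm on this type is the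
Frobenius norm and the norm on real^'n is the Euclidean norm.\<close>

definition jl_type_distribution :: "(real^'n^'d) measure \<Rightarrow> bool" where
  "jl_type_distribution M \<longleftrightarrow>
     prob_space M \<and> sets M = sets borel \<and>
     (\<exists>eps'>0. \<exists>delta'>0. delta' < 1/2 \<and>
        (\<exists>C>0. real CARD('d) \<le> C * (- ln delta' / eps'^2)) \<and>
        (\<forall>x::real^'n. norm x = 1 \<longrightarrow>
           measure M {A \<in> space M. \<bar>(norm (A *v x))^2 - 1\<bar> \<le> eps'} \<ge> 1 - delta'))"

definition sketched_newton_op ::
  "(real^'n \<Rightarrow> real^'n) \<Rightarrow> (real^'n \<Rightarrow> (real^'n^'n) set) \<Rightarrow> real^'n \<Rightarrow> real^'n^'d \<Rightarrow> (real^'n) set" where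
  "sketched_newton_op F HF x S =
     {x - transpose S *v (matrix_inv (S ** H ** transpose S) *v (S *v F x)) | H.
        H \<in> HF x \<and> det (S ** H ** transpose S) \<noteq> 0}"

end

theory Submission
  imports Defs
begin

text \<open>Write \<open>v = y - xbar\<close> and \<open>K = S H S\<^sup>T\<close>. By (ii), \<open>y\<^sup>+ - xbar\<close> is bounded by
\<open>(1 + eps) \<parallel>K\<^sup>-\<^sup>1 (K S v - S F y)\<parallel> \<le> (1 + eps) \<parallel>K\<^sup>-\<^sup>1\<parallel> \<parallel>S F y - K S v\<parallel>\<close>; by (iii) the last norm
is at most \<open>(1 + eps) \<parallel>F y - S\<^sup>T S H S\<^sup>T S v\<parallel>\<close>, and since \<open>S\<^sup>T S H S\<^sup>T S\<close> is \<open>eps\<close>-close to \<open>H\<close>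
while \<open>F y\<close> is \<open>c \<parallel>v\<parallel>\<close>-close to \<open>H v\<close>, this is at most \<open>(c + eps) \<parallel>v\<parallel>\<close>. So the event of
(i)--(iii) is contained, up to the null set where \<open>K\<close> is singular, in the target event,
which is measurable because matrix inversion is Borel.\<close>

lemma continuous_on_matrix_vector_mult [continuous_intros]:
  fixes f :: "'a::topological_space \<Rightarrow> 'b::{real_normed_algebra,semiring_1}^'n^'m"
  shows "continuous_on S f \<Longrightarrow> continuous_on S g \<Longrightarrow> continuous_on S (\<lambda>x. f x *v g x)"
  unfolding matrix_vector_mult_def by (intro continuous_intros)

lemma continuous_on_matrix_matrix_mult [continuous_intros]:
  fixes f :: "'a::topological_space \<Rightarrow> 'b::{real_normed_algebra,semiring_1}^'n^'m"
  shows "continuous_on S f \<Longrightarrow> continuous_on S g \<Longrightarrow> continuous_on S (\<lambda>x. f x ** g x)"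
  unfolding matrix_matrix_mult_def by (intro continuous_intros)

lemma continuous_on_transpose [continuous_intros]:
  fixes f :: "'a::topological_space \<Rightarrow> 'b::real_normed_vector^'n^'m"
  shows "continuous_on S f \<Longrightarrow> continuous_on S (\<lambda>x. transpose (f x))"
  unfolding transpose_def by (intro continuous_intros)

lemma continuous_on_det [continuous_intros]:
  fixes f :: "'a::topological_space \<Rightarrow> 'b::{real_normed_algebra_1,comm_ring_1}^'n^'n"
  shows "continuous_on S f \<Longrightarrow> continuous_on S (\<lambda>x. det (f x))"
  unfolding det_def by (intro continuous_intros)

lemma continuous_on_if_const [continuous_intros]:
  "continuous_on S f \<Longrightarrow> continuous_on S g \<Longrightarrow> continuous_on S (\<lambda>x. if P then f x else g x)"
  by (cases P) auto

lemma norm_matrix_vector_mult_le: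
  fixes A :: "real^'n^'m"
  shows "norm (A *v x) \<le> norm A * norm x"
proof -
  have "norm (A *v x) = L2_set (\<lambda>i. \<bar>A $ i \<bullet> x\<bar>) UNIV"
    by (simp add: norm_vec_def matrix_vector_mul_component)
  also have "\<dots> \<le> L2_set (\<lambda>i. norm (A $ i) * norm x) UNIV"
    by (intro L2_set_mono) (simp_all add: Cauchy_Schwarz_ineq2)
  also have "\<dots> = norm A * norm x"
    by (simp add: L2_set_left_distrib norm_vec_def[of A])
  finally show ?thesis .
qed

lemma matrix_inv_not_invertible:
  fixes A :: "'a::semiring_1^'n^'m"
  assumes "\<not> invertible A"
  shows "matrix_inv A = (SOME B. False)"
proof -
  have "(\<lambda>B. A ** B = mat 1 \<and> B ** A = mat 1) = (\<lambda>B. False)"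
    using assms unfolding invertible_def by auto
  then show ?thesis
    unfolding matrix_inv_def by simp
qed

lemma
  fixes A :: "'a::semiring_1^'n^'m"
  assumes "invertible A"
  shows matrix_inv_right: "A ** matrix_inv A = mat 1"
    and matrix_inv_left: "matrix_inv A ** A = mat 1"
  using someI_ex[of "\<lambda>B. A ** B = mat 1 \<and> B ** A = mat 1"] assms
  unfolding matrix_inv_def invertible_def by auto

lemma matrix_inv_cramer:
  fixes A :: "'a::field^'n^'n"
  assumes "det A \<noteq> 0"
  shows "matrix_inv A = (\<chi> i j. det (\<chi> r s. if s = i then axis j 1 $ r else A $ r $ s) / det A)"
proof -
  have invA: "invertible A"
    using assms invertible_det_nz by blast
  have "matrix_inv A $ i $ j = det (\<chi> r s. if s = i then axis j 1 $ r else A $ r $ s) / det A" for i j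
  proof -
    have "A *v (matrix_inv A *v axis j 1) = axis j 1"
      by (simp add: matrix_vector_mul_assoc matrix_inv_right[OF invA])
    then have "matrix_inv A *v axis j 1 = (\<chi> k. det (\<chi> r s. if s = k then axis j 1 $ r else A $ r $ s) / det A)"
      using cramer[OF assms] by blast
    moreover have "(matrix_inv A *v axis j 1) $ i = matrix_inv A $ i $ j"
      by (simp add: matrix_vector_mult_def axis_def if_distrib cong: if_cong)
    ultimately show ?thesis
      by simp
  qed
  then show ?thesis
    by (simp add: vec_eq_iff)
qed

lemma borel_measurable_matrix_inv: "(matrix_inv :: real^'n^'n \<Rightarrow> _) \<in> borel_measurable borel"
proof -
  let ?cramer = "\<lambda>A::real^'n^'n. \<chi> i j. det (\<chi> r s. if s = i then axis j 1 $ r else A $ r $ s) / det A"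
  have matrix_inv_eq: "matrix_inv = (\<lambda>A. if A \<in> {A. det A \<noteq> 0} then ?cramer A else (SOME B. False))"
    using matrix_inv_cramer matrix_inv_not_invertible invertible_det_nz by (fastforce simp: fun_eq_iff)
  have "open {A::real^'n^'n. det A \<noteq> 0}"
    by (intro open_Collect_neq continuous_intros)
  then show ?thesis
    unfolding matrix_inv_eq
    by (intro borel_measurable_continuous_on_if borel_open) (auto intro!: continuous_intros)
qed

lemma borel_measurable_matrix_inv_congruence:
  fixes H :: "real^'n^'n"
  shows "(\<lambda>S::real^'n^'d. matrix_inv (S ** H ** transpose S)) \<in> borel_measurable borel"
  by (intro measurable_compose[OF _ borel_measurable_matrix_inv] borel_measurable_continuous_onI
      continuous_intros)

lemma borel_measurable_sketched_newton_step:
  fixes H :: "real^'n^'n"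
  shows "(\<lambda>S::real^'n^'d. x - transpose S *v (matrix_inv (S ** H ** transpose S) *v (S *v g)))
           \<in> borel_measurable borel"
  by (rule borel_measurable_continuous_Pair[OF measurable_ident_sets[OF refl]
        borel_measurable_matrix_inv_congruence, of "\<lambda>S K. x - transpose S *v (K *v (S *v g))"])
    (intro continuous_intros)

lemma norm_residual_perturb_le:
  fixes H P :: "real^'n^'m"
  assumes "norm (g - H *v v) \<le> c * norm v" and "norm (P - H) \<le> eps"
  shows "norm (g - P *v v) \<le> (c + eps) * norm v"
proof -
  have "g - P *v v = (g - H *v v) + (H - P) *v v"
    by (simp add: matrix_vector_mult_diff_rdistrib)
  then have "norm (g - P *v v) \<le> norm (g - H *v v) + norm ((H - P) *v v)"
    by (metis norm_triangle_ineq)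
  also have "\<dots> \<le> c * norm v + norm (H - P) * norm v"
    using assms(1) norm_matrix_vector_mult_le by (rule add_mono)
  also have "\<dots> \<le> c * norm v + eps * norm v"
    using assms(2) by (simp add: norm_minus_commute mult_right_mono)
  finally show ?thesis
    by (simp add: distrib_right)
qed

lemma sketched_newton_error_le:
  fixes S :: "real^'n^'d" and H :: "real^'n^'n"
  defines "K \<equiv> S ** H ** transpose S"
  assumes "invertible K"
    and "norm (g - H *v v) \<le> c * norm v"
    and "norm (transpose S ** S ** H ** transpose S ** S - H) \<le> eps"
    and "norm (v - transpose S *v (matrix_inv K *v (S *v g)))
           \<le> (1 + eps) * norm (S *v v - matrix_inv K *v (S *v g))"
    and "norm (S *v g - K *v (S *v v)) \<le> (1 + eps) * norm (g - transpose S *v (K *v (S *v v)))"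
  shows "norm (v - transpose S *v (matrix_inv K *v (S *v g)))
           \<le> (1 + eps)^2 * (c + eps) * norm (matrix_inv K) * norm v"
proof -
  have "0 \<le> 1 + eps"
    using assms(4) norm_ge_zero[of "transpose S ** S ** H ** transpose S ** S - H"] by linarith
  have "matrix_inv K *v (K *v w) = w" for w
    by (simp add: matrix_vector_mul_assoc matrix_inv_left[OF assms(2)])
  then have "S *v v - matrix_inv K *v (S *v g) = matrix_inv K *v (K *v (S *v v) - S *v g)"
    by (simp add: matrix_vector_mult_diff_distrib)
  then have "norm (S *v v - matrix_inv K *v (S *v g)) \<le> norm (matrix_inv K) * norm (S *v g - K *v (S *v v))"
    using norm_matrix_vector_mult_le norm_minus_commute by metis
  also have "\<dots> \<le> norm (matrix_inv K) * ((1 + eps) * ((c + eps) * norm v))"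
  proof (rule mult_left_mono)
    have "transpose S *v (K *v (S *v v)) = (transpose S ** S ** H ** transpose S ** S) *v v"
      by (simp add: K_def matrix_vector_mul_assoc matrix_mul_assoc)
    then have "(1 + eps) * norm (g - transpose S *v (K *v (S *v v))) \<le> (1 + eps) * ((c + eps) * norm v)"
      using norm_residual_perturb_le[OF assms(3,4)] \<open>0 \<le> 1 + eps\<close> by (simp add: mult_left_mono)
    with assms(6) show "norm (S *v g - K *v (S *v v)) \<le> (1 + eps) * ((c + eps) * norm v)"
      by (rule order_trans)
  qed simp
  finally have "(1 + eps) * norm (S *v v - matrix_inv K *v (S *v g))
      \<le> (1 + eps) * (norm (matrix_inv K) * ((1 + eps) * ((c + eps) * norm v)))"
    using \<open>0 \<le> 1 + eps\<close> by (rule mult_left_mono)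
  also have "\<dots> = (1 + eps)^2 * (c + eps) * norm (matrix_inv K) * norm v"
    by (simp add: power2_eq_square)
  finally show ?thesis
    using assms(5) by (rule order_trans[rotated])
qed

theorem mainTheorem6:
  fixes U :: "(real^'n) set" and F :: "real^'n \<Rightarrow> real^'n" and xbar :: "real^'n"
    and HF :: "real^'n \<Rightarrow> (real^'n^'n) set" and c :: real
    and M :: "(real^'n^'d) measure"
    and y :: "real^'n" and H :: "real^'n^'n" and eps delta :: real
  assumes "CARD('d) \<le> CARD('n)"
    and "xbar \<in> U" and "F xbar = 0" and "c > 0"
    and "\<forall>x\<in>U. \<forall>H'\<in>HF x. norm (F x - H' *v (x - xbar)) \<le> c * norm (x - xbar)"
    and "jl_type_distribution M"
    and "y \<in> U" and "H \<in> HF y"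
    and "eps > 0" and "delta > 0"
    and "measure M {S \<in> space M.
            norm (transpose S ** S ** H ** transpose S ** S - H) \<le> eps \<and>
            norm (y - xbar - transpose S *v (matrix_inv (S ** H ** transpose S) *v (S *v F y)))
              \<le> (1 + eps) * norm (S *v y - S *v xbar - matrix_inv (S ** H ** transpose S) *v (S *v F y)) \<and>
            norm (S *v F y - (S ** H ** transpose S) *v (S *v (y - xbar)))
              \<le> (1 + eps) * norm (F y - transpose S *v ((S ** H ** transpose S) *v (S *v (y - xbar))))}
          \<ge> 1 - delta"
    and "AE S in M. det (S ** H ** transpose S) \<noteq> 0"
  shows "measure M {S \<in> space M.
            norm ((y - transpose S *v (matrix_inv (S ** H ** transpose S) *v (S *v F y))) - xbar)
              \<le> (1 + eps)^2 * (c + eps) * norm (matrix_inv (S ** H ** transpose S)) * norm (y - xbar)}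
          \<ge> 1 - delta"
proof -
  interpret prob_space M
    using assms(6) unfolding jl_type_distribution_def by blast
  have "sets M = sets borel"
    using assms(6) unfolding jl_type_distribution_def by blast
  then have measurable_eq: "borel_measurable M = borel_measurable borel"
    by (rule measurable_cong_sets) (rule refl)
  have [measurable]:
    "(\<lambda>S. y - transpose S *v (matrix_inv (S ** H ** transpose S) *v (S *v F y))) \<in> borel_measurable M"
    "(\<lambda>S. matrix_inv (S ** H ** transpose S)) \<in> borel_measurable M"
    unfolding measurable_eq
    by (rule borel_measurable_sketched_newton_step borel_measurable_matrix_inv_congruence)+
  show ?thesis
  proof (rule order_trans[OF assms(11) finite_measure_mono_AE], goal_cases)
    case 1
    from assms(12) show ?case
    proof eventually_elim
      case (elim S)
      then show ?case
        using sketched_newton_error_le[of S H "F y" "y - xbar" c eps] assms(5,7,8) invertible_det_nz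
        by (auto simp: matrix_vector_mult_diff_distrib algebra_simps)
    qed
  next
    case 2
    show ?case
      by measurable
  qed
qed

end
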